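(* For $1\le i\le n$ define the polynomial $$F(n,i)(p,q)=\sum_{\pi\in S_n,\ \pi_n=i}p^{\mathrm{inv}(\pi)}q^{\mathrm{maj}(\pi)} .$$ Then $F(1,1)=1$, and for $n\ge 2$: $$F(n,i)=p^{n-i}\sum_{j=1}^{i-1}F(n-1,j)+p^{n-i}q^{n-1}\sum_{j=i}^{n-1}F(n-1,j)\qquad(1\le i\le n),$$ and consequently $$F(n,i)=p\,F(n,i+1)+p^{n-i}(q^{n-1}-1)F(n-1,i)\quad (1\le i<n),\qquad F(n,n)=\sum_{j=1}^{n-1}F(n-1,j).$$ Moreover $\sum_{\pi\in S_n}p^{\mathrm{inv}(\pi)}q^{\mathrm{maj}(\pi)}=F(n+1,n+1)(p,q)$.
   Context: For a permutation $\pi=\pi_1\cdots\pi_n$ of $\{1,\dots,n\}$: $\mathrm{inv}(\pi)$ is the number of pairs $1\le i<j\le n$ with $\pi_i>\pi_j$, and $\mathrm{maj}(\pi)$ is the sum of all positions $i\in\{1,\dots,n-1\}$ with $\pi_i>\pi_{i+1}$. *)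

theory Defs
  imports "HOL-Combinatorics.Permutations"
begin

text \<open>Permutations of {1..n} are functions pi with pi permutes {1..n}; pi i is the entry at position i.\<close>

definition inv_count :: "nat \<Rightarrow> (nat \<Rightarrow> nat) \<Rightarrow> nat" where
  "inv_count n \<pi> = card {(i, j). 1 \<le> i \<and> i < j \<and> j \<le> n \<and> \<pi> i > \<pi> j}"

definition maj :: "nat \<Rightarrow> (nat \<Rightarrow> nat) \<Rightarrow> nat" where
  "maj n \<pi> = (\<Sum>i \<in> {i. 1 \<le> i \<and> i \<le> n - 1 \<and> \<pi> i > \<pi> (Suc i)}. i)"

definition F :: "nat \<Rightarrow> nat \<Rightarrow> 'a::comm_ring_1 \<Rightarrow> 'a \<Rightarrow> 'a" where
  "F n i p q = (\<Sum>\<pi> \<in> {\<pi>. \<pi> permutes {1..n} \<and> \<pi> n = i}. p ^ inv_count n \<pi> * q ^ maj n \<pi>)"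

end

theory Submission
  imports Defs
begin

(* A permutation pi of {1..m+1} with last entry i is the same thing
   as a permutation s of {1..m} (its standardisation) together with i: the first m
   entries of pi are those of s, with every value >= i shifted up by one.  Under this
   bijection
     inv pi = inv s + (m + 1 - i)      (the last entry is beaten by the m+1-i larger values)
     maj pi = maj s + [i <= s m] * m   (a new descent at position m iff pi m > i).
   Hence F(m+1,i) is a sum over all permutations s of {1..m} of a weight of s times
   p^(m+1-i) and, if s m >= i, q^m.  Grouping the permutations s by their last entry
   gives the recursion for F(n,i); subtracting two consecutive instances gives the
   three-term recursion; the case i = m+1 (no factor at all) shows that the generating
   function of all permutations of {1..m} equals F(m+1,m+1), and m = 0 gives F(1,1) = 1. *)

definition perm_weight :: "nat \<Rightarrow> 'a::comm_ring_1 \<Rightarrow> 'a \<Rightarrow> (nat \<Rightarrow> nat) \<Rightarrow> 'a" where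
  "perm_weight n p q \<pi> = p ^ inv_count n \<pi> * q ^ maj n \<pi>"

lemma F_perm_weight: "F n i p q = (\<Sum>\<pi> | \<pi> permutes {1..n} \<and> \<pi> n = i. perm_weight n p q \<pi>)"
  unfolding F_def perm_weight_def ..

definition insert_last :: "nat \<Rightarrow> nat \<Rightarrow> (nat \<Rightarrow> nat) \<Rightarrow> nat \<Rightarrow> nat" where
  "insert_last m i s k =
     (if k = Suc m then i else if k \<in> {1..m} then (if s k < i then s k else Suc (s k)) else k)"

definition delete_last :: "nat \<Rightarrow> nat \<Rightarrow> (nat \<Rightarrow> nat) \<Rightarrow> nat \<Rightarrow> nat" where
  "delete_last m i \<pi> k = (if k \<in> {1..m} then (if \<pi> k < i then \<pi> k else \<pi> k - 1) else k)"

lemma permutes_by_inj_on: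
  fixes f :: "nat \<Rightarrow> nat"
  assumes "f ` {1..m} \<subseteq> {1..m}" "inj_on f {1..m}" "\<And>x. x \<notin> {1..m} \<Longrightarrow> f x = x"
  shows "f permutes {1..m}"
proof (rule bij_imp_permutes)
  show "bij_betw f {1..m} {1..m}"
    using assms(2) endo_inj_surj[OF _ assms(1,2)] by (simp add: bij_betw_def)
qed (use assms(3) in simp)

lemma insert_last_permutes:
  assumes s: "s permutes {1..m}" and i: "i \<in> {1..Suc m}"
  shows "insert_last m i s permutes {1..Suc m}"
proof (rule permutes_by_inj_on)
  have s_in: "\<And>k. k \<in> {1..m} \<Longrightarrow> s k \<in> {1..m}" using permutes_in_image[OF s] by blast
  then show "insert_last m i s ` {1..Suc m} \<subseteq> {1..Suc m}"
    using i by (force simp: insert_last_def)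
  show "inj_on (insert_last m i s) {1..Suc m}"
    using s_in permutes_inj[OF s] i
    by (intro inj_onI) (auto simp: insert_last_def inj_eq split: if_splits)
qed (auto simp: insert_last_def)

lemma permutes_earlier_entries:
  assumes "\<pi> permutes {1..Suc m}" "k \<in> {1..m}"
  shows "\<pi> k \<noteq> \<pi> (Suc m)"
  using assms(2) inj_eq[OF permutes_inj[OF assms(1)]] by simp

lemma delete_last_permutes:
  assumes \<pi>: "\<pi> permutes {1..Suc m}" and last: "\<pi> (Suc m) = i"
  shows "delete_last m i \<pi> permutes {1..m}"
proof (rule permutes_by_inj_on)
  have \<pi>_in: "\<And>k. k \<in> {1..m} \<Longrightarrow> \<pi> k \<in> {1..Suc m}" using permutes_in_image[OF \<pi>] by simp
  have not_i: "\<And>k. k \<in> {1..m} \<Longrightarrow> \<pi> k \<noteq> i"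
    using permutes_earlier_entries[OF \<pi>] last by simp
  have i_in: "i \<in> {1..Suc m}" using permutes_in_image[OF \<pi>, of "Suc m"] last by simp
  show "delete_last m i \<pi> ` {1..m} \<subseteq> {1..m}"
  proof clarify
    fix k assume "k \<in> {1..m}"
    then show "delete_last m i \<pi> k \<in> {1..m}"
      using i_in \<pi>_in[of k] not_i[of k] by (simp add: delete_last_def) arith
  qed
  show "inj_on (delete_last m i \<pi>) {1..m}"
  proof (rule inj_onI)
    fix a b assume a: "a \<in> {1..m}" and b: "b \<in> {1..m}"
      and eq: "delete_last m i \<pi> a = delete_last m i \<pi> b"
    then have "\<pi> a = \<pi> b" using not_i[OF a] not_i[OF b]
      by (simp add: delete_last_def split: if_splits)
    then show "a = b" by (simp add: inj_eq[OF permutes_inj[OF \<pi>]])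
  qed
qed (auto simp: delete_last_def)

lemma bij_insert_last:
  assumes i: "i \<in> {1..Suc m}"
  shows "bij_betw (insert_last m i) {s. s permutes {1..m}}
           {\<pi>. \<pi> permutes {1..Suc m} \<and> \<pi> (Suc m) = i}"
proof (rule bij_betw_byWitness[where f' = "delete_last m i"])
  show "\<forall>s\<in>{s. s permutes {1..m}}. delete_last m i (insert_last m i s) = s"
  proof (intro ballI ext)
    fix s k assume "s \<in> {s. s permutes {1..m}}"
    then show "delete_last m i (insert_last m i s) k = s k"
      using permutes_not_in[of s "{1..m}" k] by (simp add: delete_last_def insert_last_def)
  qed
  show "\<forall>\<pi>\<in>{\<pi>. \<pi> permutes {1..Suc m} \<and> \<pi> (Suc m) = i}. insert_last m i (delete_last m i \<pi>) = \<pi>"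
  proof (intro ballI ext)
    fix \<pi> k assume "\<pi> \<in> {\<pi>. \<pi> permutes {1..Suc m} \<and> \<pi> (Suc m) = i}"
    then have \<pi>: "\<pi> permutes {1..Suc m}" and last: "\<pi> (Suc m) = i" by auto
    show "insert_last m i (delete_last m i \<pi>) k = \<pi> k"
    proof (cases "k \<in> {1..m}")
      case True
      then have "\<pi> k \<in> {1..Suc m}" "\<pi> k \<noteq> i"
        using permutes_in_image[OF \<pi>, of k] permutes_earlier_entries[OF \<pi>] last by auto
      then show ?thesis using True by (simp add: delete_last_def insert_last_def) arith
    next
      case False
      show ?thesis
      proof (cases "k = Suc m")
        case True
        then show ?thesis using last by (simp add: delete_last_def insert_last_def)
      next
        case outside: False
        then have "\<pi> k = k" using False permutes_not_in[OF \<pi>, of k] by auto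
        then show ?thesis using False outside by (simp add: delete_last_def insert_last_def)
      qed
    qed
  qed
  show "insert_last m i ` {s. s permutes {1..m}} \<subseteq> {\<pi>. \<pi> permutes {1..Suc m} \<and> \<pi> (Suc m) = i}"
    using insert_last_permutes[OF _ i] by (auto simp: insert_last_def)
  show "delete_last m i ` {\<pi>. \<pi> permutes {1..Suc m} \<and> \<pi> (Suc m) = i} \<subseteq> {s. s permutes {1..m}}"
    using delete_last_permutes by auto
qed

(* The appended entry i is an inversion with exactly the m+1-i larger values before it. *)
lemma inv_count_insert_last:
  assumes s: "s permutes {1..m}" and i: "i \<in> {1..Suc m}"
  shows "inv_count (Suc m) (insert_last m i s) = inv_count m s + (Suc m - i)"
proof -
  let ?old = "{(a, b). 1 \<le> a \<and> a < b \<and> b \<le> m \<and> s a > s b}"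
  let ?larger = "{a \<in> {1..m}. i \<le> s a}"
  let ?new = "(\<lambda>a. (a, Suc m)) ` ?larger"
  have split: "{(a, b). 1 \<le> a \<and> a < b \<and> b \<le> Suc m \<and> insert_last m i s a > insert_last m i s b}
      = ?old \<union> ?new"
  proof (intro set_eqI, clarify)
    fix a b
    show "((a, b) \<in> {(a, b). 1 \<le> a \<and> a < b \<and> b \<le> Suc m \<and> insert_last m i s a > insert_last m i s b})
        = ((a, b) \<in> ?old \<union> ?new)"
      by (cases "b = Suc m") (auto simp: insert_last_def)
  qed
  have "s ` ?larger = {i..m}"
  proof
    show "s ` ?larger \<subseteq> {i..m}"
    proof clarify
      fix a assume "a \<in> {1..m}" "i \<le> s a"
      then show "s a \<in> {i..m}" using permutes_in_image[OF s, of a] by simp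
    qed
    show "{i..m} \<subseteq> s ` ?larger"
    proof
      fix y assume y: "y \<in> {i..m}"
      then have "y \<in> s ` {1..m}" using permutes_image[OF s] i by auto
      then show "y \<in> s ` ?larger" using y by auto
    qed
  qed
  then have "card ?larger = Suc m - i"
    using card_image[OF inj_on_subset[OF permutes_inj[OF s]], of ?larger] by simp
  moreover have "card ?new = card ?larger" by (rule card_image) (auto intro: inj_onI)
  moreover have "finite ?old" by (rule finite_subset[of _ "{1..m} \<times> {1..m}"]) auto
  moreover have "?old \<inter> ?new = {}" by auto
  ultimately show ?thesis unfolding inv_count_def split by (simp add: card_Un_disjoint)
qed

(* The only new descent can be at position m, and it occurs iff the old last value is >= i. *)
lemma maj_insert_last:
  assumes s: "s permutes {1..m}" and i: "i \<in> {1..Suc m}"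
  shows "maj (Suc m) (insert_last m i s) = maj m s + (if i \<le> s m then m else 0)"
proof -
  let ?old = "{k. 1 \<le> k \<and> k \<le> m - 1 \<and> s k > s (Suc k)}"
  have "i \<le> s m \<Longrightarrow> 1 \<le> m" using permutes_not_in[OF s, of 0] i by (cases m) auto
  then have "{k. 1 \<le> k \<and> k \<le> Suc m - 1 \<and> insert_last m i s k > insert_last m i s (Suc k)}
        = ?old \<union> (if i \<le> s m then {m} else {})"
    using i by (auto simp: insert_last_def split: if_splits)
  moreover have "finite ?old" by (rule finite_subset[of _ "{1..m}"]) auto
  moreover have "m \<notin> ?old" by auto
  ultimately show ?thesis unfolding maj_def by auto
qed

lemma F_Suc_as_sum:
  assumes i: "i \<in> {1..Suc m}"
  shows "F (Suc m) i p q = (\<Sum>s | s permutes {1..m}.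
           p ^ (Suc m - i) * (if i \<le> s m then q ^ m else 1) * perm_weight m p q s)"
proof -
  have "F (Suc m) i p q = (\<Sum>s | s permutes {1..m}. perm_weight (Suc m) p q (insert_last m i s))"
    unfolding F_perm_weight by (rule sum.reindex_bij_betw[OF bij_insert_last[OF i], symmetric])
  also have "\<dots> = (\<Sum>s | s permutes {1..m}.
           p ^ (Suc m - i) * (if i \<le> s m then q ^ m else 1) * perm_weight m p q s)"
    using inv_count_insert_last[OF _ i] maj_insert_last[OF _ i]
    by (intro sum.cong) (simp_all add: perm_weight_def power_add algebra_simps)
  finally show ?thesis .
qed

lemma sum_F_last_in:
  assumes J: "finite J"
  shows "(\<Sum>j\<in>J. F m j p q) = (\<Sum>s | s permutes {1..m} \<and> s m \<in> J. perm_weight m p q s)"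
proof -
  let ?S = "{s. s permutes {1..m} \<and> s m \<in> J}"
  have fibre: "{\<pi>. \<pi> permutes {1..m} \<and> \<pi> m = j} = {s \<in> ?S. s m = j}" if "j \<in> J" for j
    using that by auto
  have "(\<Sum>j\<in>J. F m j p q) = (\<Sum>j\<in>J. \<Sum>s \<in> {s \<in> ?S. s m = j}. perm_weight m p q s)"
    unfolding F_perm_weight by (intro sum.cong refl) (simp only: fibre)
  also have "\<dots> = sum (perm_weight m p q) ?S"
    using J finite_permutations[of "{1..m}"] by (intro sum.group) auto
  finally show ?thesis .
qed

(* The base case: the only permutation of the empty set has weight 1. *)
theorem F_one_one: "F 1 1 p q = 1"
proof -
  have "F 1 1 p q = (\<Sum>s | s permutes {1..0::nat}. perm_weight 0 p q s)"
    using F_Suc_as_sum[of 1 0] by simp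
  also have "\<dots> = perm_weight 0 p q id" by simp
  also have "\<dots> = 1"
  proof -
    have "{(i, j). 1 \<le> i \<and> i < j \<and> j \<le> (0::nat) \<and> id i > id j} = {}" by auto
    then have "inv_count 0 id = 0" unfolding inv_count_def by (simp only: card.empty)
    then show ?thesis by (simp add: perm_weight_def maj_def)
  qed
  finally show ?thesis .
qed

(* The generating function of all permutations of {1..m} is F(m+1,m+1): appending the
   maximal value m+1 creates neither inversions nor descents. *)
theorem total_weight_eq_F:
  "(\<Sum>\<pi> | \<pi> permutes {1..m}. p ^ inv_count m \<pi> * q ^ maj m \<pi>) = F (m + 1) (m + 1) p q"
proof -
  have last_le: "s m \<le> m" if "s permutes {1..m}" for s
    using permutes_in_image[OF that, of m] permutes_not_in[OF that, of m] by (cases "m = 0") auto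
  have "F (Suc m) (Suc m) p q = (\<Sum>s | s permutes {1..m}.
           p ^ (Suc m - Suc m) * (if Suc m \<le> s m then q ^ m else 1) * perm_weight m p q s)"
    by (rule F_Suc_as_sum) simp
  also have "\<dots> = (\<Sum>s | s permutes {1..m}. p ^ inv_count m s * q ^ maj m s)"
  proof (rule sum.cong[OF refl])
    fix s assume "s \<in> {s. s permutes {1..m}}"
    then have "s m \<le> m" using last_le by simp
    then show "p ^ (Suc m - Suc m) * (if Suc m \<le> s m then q ^ m else 1) * perm_weight m p q s
        = p ^ inv_count m s * q ^ maj m s" by (simp add: perm_weight_def)
  qed
  finally show ?thesis by simp
qed

(* The main recursion for m >= 1: split the permutations s by whether s m < i. *)
theorem F_recursion:
  assumes m: "1 \<le> m" and i: "i \<in> {1..Suc m}"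
  shows "F (Suc m) i p q = p ^ (Suc m - i) * (\<Sum>j = 1..i - 1. F m j p q)
                         + p ^ (Suc m - i) * q ^ m * (\<Sum>j = i..m. F m j p q)"
proof -
  let ?P = "{s. s permutes {1..m}}"
  let ?w = "perm_weight m p q"
  have filter: "(\<Sum>s\<in>?P. if s m \<in> J then ?w s else 0) = (\<Sum>s | s permutes {1..m} \<and> s m \<in> J. ?w s)"
    for J using sum.inter_filter[of ?P ?w "\<lambda>s. s m \<in> J"] finite_permutations[of "{1..m}"] by simp
  have last_in: "s m \<in> {1..m}" if "s \<in> ?P" for s
    using that m permutes_in_image[of s "{1..m}" m] by simp
  have "F (Suc m) i p q = (\<Sum>s\<in>?P. p ^ (Suc m - i) * (if s m \<in> {1..i - 1} then ?w s else 0)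
                                 + p ^ (Suc m - i) * q ^ m * (if s m \<in> {i..m} then ?w s else 0))"
    unfolding F_Suc_as_sum[OF i] using last_in i by (intro sum.cong) auto
  also have "\<dots> = p ^ (Suc m - i) * (\<Sum>s\<in>?P. if s m \<in> {1..i - 1} then ?w s else 0)
                 + p ^ (Suc m - i) * q ^ m * (\<Sum>s\<in>?P. if s m \<in> {i..m} then ?w s else 0)"
    by (simp only: sum.distrib sum_distrib_left)
  finally show ?thesis by (simp only: filter sum_F_last_in finite_atLeastAtMost)
qed

corollary F_recursion_n:
  assumes "2 \<le> n" "1 \<le> i" "i \<le> n"
  shows "F n i p q = p ^ (n - i) * (\<Sum>j = 1..i - 1. F (n - 1) j p q)
                   + p ^ (n - i) * q ^ (n - 1) * (\<Sum>j = i..n - 1. F (n - 1) j p q)"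
  using F_recursion[of "n - 1" i p q] assms by (simp add: Suc_diff_le)

(* Comparing the recursions for i and i + 1: the sums differ only in the term j = i. *)
theorem F_three_term:
  assumes n: "2 \<le> n" and i: "1 \<le> i" "i < n"
  shows "F n i p q = p * F n (i + 1) p q + p ^ (n - i) * (q ^ (n - 1) - 1) * F (n - 1) i p q"
proof -
  let ?G = "\<lambda>j. F (n - 1) j p q"
  have low: "(\<Sum>j = 1..i. ?G j) = (\<Sum>j = 1..i - 1. ?G j) + ?G i"
    using i by (cases i) (simp_all add: sum.cl_ivl_Suc)
  have high: "(\<Sum>j = i..n - 1. ?G j) = ?G i + (\<Sum>j = i + 1..n - 1. ?G j)"
    using i by (simp add: sum.atLeast_Suc_atMost)
  have pow: "p * p ^ (n - (i + 1)) = p ^ (n - i)"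
    using i by (simp flip: power_Suc add: Suc_diff_Suc)
  have "p * F n (i + 1) p q = p ^ (n - i) * (\<Sum>j = 1..i. ?G j)
                            + p ^ (n - i) * q ^ (n - 1) * (\<Sum>j = i + 1..n - 1. ?G j)"
    using F_recursion_n[OF n, of "i + 1" p q] i by (simp add: algebra_simps flip: pow)
  then show ?thesis
    using F_recursion_n[OF n i(1), of p q] i low high by (simp add: algebra_simps)
qed

theorem mainTheorem5:
  fixes p q :: "'a::comm_ring_1"
  shows "F 1 1 p q = 1
    \<and> (\<forall>n i. 2 \<le> n \<and> 1 \<le> i \<and> i \<le> n \<longrightarrow>
          F n i p q = p ^ (n - i) * (\<Sum>j = 1..i - 1. F (n - 1) j p q)
                    + p ^ (n - i) * q ^ (n - 1) * (\<Sum>j = i..n - 1. F (n - 1) j p q))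
    \<and> (\<forall>n i. 2 \<le> n \<and> 1 \<le> i \<and> i < n \<longrightarrow>
          F n i p q = p * F n (i + 1) p q + p ^ (n - i) * (q ^ (n - 1) - 1) * F (n - 1) i p q)
    \<and> (\<forall>n. 2 \<le> n \<longrightarrow> F n n p q = (\<Sum>j = 1..n - 1. F (n - 1) j p q))
    \<and> (\<forall>n. (\<Sum>\<pi> \<in> {\<pi>. \<pi> permutes {1..n}}. p ^ inv_count n \<pi> * q ^ maj n \<pi>)
            = F (n + 1) (n + 1) p q)"
proof -
  have last_entry_max: "F n n p q = (\<Sum>j = 1..n - 1. F (n - 1) j p q)" if "2 \<le> n" for n
    using F_recursion_n[OF that, of n p q] that by simp
  show ?thesis
    using F_one_one F_recursion_n F_three_term last_entry_max total_weight_eq_F by blast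
qed

end
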